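(* Let $\beta,\varepsilon\in(0,1)$, let $(V,A,\succ)$ be an election with $n$ voters, and let $(x,y,p)$ be a LEO with total budget $B=1$ and income distribution a threshold distribution $\mathcal{I}^{\beta,\varepsilon}$. Let $C\subseteq A$. Then for every $a\in A\setminus C$, $$\big|\{v\in V: a\succ_v C\}\big|\le \frac{\beta n}{1-\varepsilon}+\big|\{v\in V: v \text{ is uncovered by } C\}\big|.$$
   Context: An election $(V,A,\succ)$: finite nonempty voter set $V$ with $n=|V|$, finite candidate set $A$, strict linear order $\succ_v$ on $A$ per voter; $a\succ_v C$ means $a\succ_v c$ for all $c\in C$. Extend $\succ_v$ to $A\cup\{\emptyset\}$ with $\emptyset$ strictly below all candidates; $a\succeq_v b$ means $a=b$ or $a\succ_v b$. Given prices $p_v\in[0,1]^{A\cup\{\emptyset\}}$ with $p_{v,\emptyset}=0$ and income $b\ge0$, voter $v$'s demand is the $\succ_v$-maximal element of $\{a\in A\cup\{\emptyset\}: p_{v,a}\le b\}$; the random demand $\mathcal{D}_v(p_v,\mathcal{I})$ is this demand with $b\sim\mathcal{I}$. A LEO $(x,y,p)$ with income $\mathcal{I}$ and budget $B>0$: prices $p_v\in[0,1]^{A\cup\{\emptyset\}}$ with $p_{v,\emptyset}=0$, consumptions $x_v\in[0,1]^{A\cup\{\emptyset\}}$, and $y\in[0,B]^A$, with (1) $x_{v,a}=\Pr[\mathcal{D}_v(p_v,\mathcal{I})=a]$; (2) $x_{v,a}\le y_a$ for $a\in A$, and $p_{v,a}=0$ whenever $x_{v,a}<y_a$; (3) $y$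 maximizes $\sum_{a}(\sum_v p_{v,a})z_a$ over $z\in\mathbb{R}^A_{\ge0}$ with $\sum_a z_a=B$. A threshold distribution $\mathcal{I}^{\beta,\varepsilon}$ is a distribution of a random variable $X$ supported on $[0,1]$ with continuous CDF, $\Pr[X\ge1-\varepsilon]=\beta$, and $\mathbb{E}[X]\le\beta$. Given the LEO, the boundary candidate of $v$ is $a_v=$ the $\succ_v$-maximal element of $\{a\in A\cup\{\emptyset\}: p_{v,a}\le1-\varepsilon\}$. Voter $v$ is covered by $C$ if some $c\in C$ satisfies $c\succeq_v a_v$, and uncovered otherwise. *)

theory Defs
  imports "HOL-Probability.Probability"
begin

text \<open>Candidates extended with the empty option: None plays the role of the empty outcome.
  R is a strict preference relation: (a,b) in R means a is strictly preferred to b.\<close>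

definition election :: "'v set \<Rightarrow> 'a set \<Rightarrow> ('v \<Rightarrow> ('a \<times> 'a) set) \<Rightarrow> bool" where
  "election V A pref \<longleftrightarrow> finite V \<and> V \<noteq> {} \<and> finite A \<and>
     (\<forall>v\<in>V. pref v \<subseteq> A \<times> A \<and> strict_linear_order_on A (pref v))"

fun opt_pref :: "('a \<times> 'a) set \<Rightarrow> 'a option \<Rightarrow> 'a option \<Rightarrow> bool" where
  "opt_pref R (Some a) (Some b) = ((a, b) \<in> R)"
| "opt_pref R (Some a) None = True"
| "opt_pref R None _ = False"

definition opt_pref_eq :: "('a \<times> 'a) set \<Rightarrow> 'a option \<Rightarrow> 'a option \<Rightarrow> bool" where
  "opt_pref_eq R o1 o2 \<longleftrightarrow> o1 = o2 \<or> opt_pref R o1 o2"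

definition outcomes :: "'a set \<Rightarrow> 'a option set" where
  "outcomes A = insert None (Some ` A)"

definition demand :: "'a set \<Rightarrow> ('a \<times> 'a) set \<Rightarrow> ('a option \<Rightarrow> real) \<Rightarrow> real \<Rightarrow> 'a option" where
  "demand A R pv b = (THE d. d \<in> outcomes A \<and> pv d \<le> b \<and>
      (\<forall>o'\<in>outcomes A. pv o' \<le> b \<longrightarrow> opt_pref_eq R d o'))"

definition threshold_distribution :: "real measure \<Rightarrow> real \<Rightarrow> real \<Rightarrow> bool" where
  "threshold_distribution I \<beta> \<epsilon> \<longleftrightarrow> real_distribution I \<and>
     measure I {0..1} = 1 \<and> (\<forall>t. isCont (cdf I) t) \<and>
     measure I {1 - \<epsilon>..} = \<beta> \<and> integral\<^sup>L I (\<lambda>t. t) \<le> \<beta>"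

definition LEO :: "'v set \<Rightarrow> 'a set \<Rightarrow> ('v \<Rightarrow> ('a \<times> 'a) set) \<Rightarrow> real measure \<Rightarrow> real \<Rightarrow>
    ('v \<Rightarrow> 'a option \<Rightarrow> real) \<Rightarrow> ('a \<Rightarrow> real) \<Rightarrow> ('v \<Rightarrow> 'a option \<Rightarrow> real) \<Rightarrow> bool" where
  "LEO V A pref I B x y p \<longleftrightarrow> B > 0 \<and>
     (\<forall>v\<in>V. p v None = 0 \<and> (\<forall>w\<in>outcomes A. 0 \<le> p v w \<and> p v w \<le> 1)) \<and>
     (\<forall>v\<in>V. \<forall>w\<in>outcomes A. 0 \<le> x v w \<and> x v w \<le> 1) \<and>
     (\<forall>a\<in>A. 0 \<le> y a \<and> y a \<le> B) \<and>
     (\<forall>v\<in>V. \<forall>w\<in>outcomes A. x v w = measure I {b. demand A (pref v) (p v) b = w}) \<and>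
     (\<forall>v\<in>V. \<forall>a\<in>A. x v (Some a) \<le> y a \<and> (x v (Some a) < y a \<longrightarrow> p v (Some a) = 0)) \<and>
     (\<Sum>a\<in>A. y a) = B \<and>
     (\<forall>z::'a \<Rightarrow> real. (\<forall>a\<in>A. 0 \<le> z a) \<and> (\<Sum>a\<in>A. z a) = B \<longrightarrow>
        (\<Sum>a\<in>A. (\<Sum>v\<in>V. p v (Some a)) * z a) \<le> (\<Sum>a\<in>A. (\<Sum>v\<in>V. p v (Some a)) * y a))"

definition boundary :: "'a set \<Rightarrow> ('v \<Rightarrow> ('a \<times> 'a) set) \<Rightarrow> ('v \<Rightarrow> 'a option \<Rightarrow> real) \<Rightarrow> real \<Rightarrow> 'v \<Rightarrow> 'a option" where
  "boundary A pref p \<epsilon> v = demand A (pref v) (p v) (1 - \<epsilon>)"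

definition covered :: "'a set \<Rightarrow> ('v \<Rightarrow> ('a \<times> 'a) set) \<Rightarrow> ('v \<Rightarrow> 'a option \<Rightarrow> real) \<Rightarrow> real \<Rightarrow> 'a set \<Rightarrow> 'v \<Rightarrow> bool" where
  "covered A pref p \<epsilon> C v \<longleftrightarrow> (\<exists>c\<in>C. opt_pref_eq (pref v) (Some c) (boundary A pref p \<epsilon> v))"

end

theory Submission
  imports Defs
begin

text \<open>Call a voter \<open>v\<close> who ranks \<open>a\<close> above all of \<open>C\<close> and is covered by \<open>C\<close> a
  \<^emph>\<open>blocking\<close> voter. Her boundary candidate is weakly below some \<open>c \<in> C\<close>, hence strictly
  below \<open>a\<close>; since the boundary is her demand at income \<open>1 - \<epsilon>\<close>, the price she faces for \<open>a\<close>
  exceeds \<open>1 - \<epsilon>\<close>. Optimality of \<open>y\<close> against the point mass on \<open>a\<close> bounds the total price of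
  \<open>a\<close> by the revenue \<open>\<Sum>\<^sub>b (\<Sum>\<^sub>v p\<^sub>v\<^sub>b) y\<^sub>b\<close>. By complementary slackness the revenue equals
  the voters' total expected spending, and each voter spends at most her income, whose
  expectation is at most \<open>\<beta>\<close>. Hence there are at most \<open>\<beta> n / (1 - \<epsilon>)\<close> blocking voters, and
  every other voter ranking \<open>a\<close> above \<open>C\<close> is uncovered.\<close>

lemma opt_pref_trans:
  assumes "trans R" "opt_pref R x y" "opt_pref R y z"
  shows "opt_pref R x z"
  using assms by (cases x; cases y; cases z) (auto dest: transD)

lemma opt_pref_irrefl:
  assumes "irrefl R"
  shows "\<not> opt_pref R x x"
  using assms by (cases x) (auto simp: irrefl_def)

lemma opt_pref_total:
  assumes "total_on A R" "x \<in> outcomes A" "y \<in> outcomes A" "x \<noteq> y"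
  shows "opt_pref R x y \<or> opt_pref R y x"
  using assms by (cases x; cases y) (auto simp: outcomes_def total_on_def)

lemma opt_pref_eq_trans:
  assumes "trans R" "opt_pref_eq R x y" "opt_pref_eq R y z"
  shows "opt_pref_eq R x z"
  using assms opt_pref_trans[of R x y z] unfolding opt_pref_eq_def by auto

lemma opt_pref_opt_pref_eq_trans:
  assumes "trans R" "opt_pref R x y" "opt_pref_eq R y z"
  shows "opt_pref R x z"
  using assms opt_pref_trans[of R x y z] unfolding opt_pref_eq_def by auto

lemma ex_opt_pref_maximal:
  assumes "strict_linear_order_on A R" "finite S" "S \<noteq> {}" "S \<subseteq> outcomes A"
  shows "\<exists>d\<in>S. \<forall>q\<in>S. opt_pref_eq R d q"
  using assms(2-4)
proof (induction S rule: finite_ne_induct)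
  case (singleton x)
  then show ?case by (auto simp: opt_pref_eq_def)
next
  case (insert x F)
  then obtain d where d: "d \<in> F" "\<forall>q\<in>F. opt_pref_eq R d q" by auto
  have tr: "trans R" and tot: "total_on A R"
    using assms(1) by (auto simp: strict_linear_order_on_def)
  show ?case
  proof (cases "opt_pref_eq R x d")
    case True
    then show ?thesis using d opt_pref_eq_trans[OF tr True] by (auto simp: opt_pref_eq_def)
  next
    case False
    then have "opt_pref R d x"
      using opt_pref_total[OF tot, of x d] insert d by (auto simp: opt_pref_eq_def)
    then show ?thesis using d by (auto simp: opt_pref_eq_def)
  qed
qed

lemma demand_spec:
  assumes "strict_linear_order_on A R" "finite A" "pv None = 0" "0 \<le> b"
  shows "demand A R pv b \<in> outcomes A" "pv (demand A R pv b) \<le> b"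
    "\<And>w. w \<in> outcomes A \<Longrightarrow> pv w \<le> b \<Longrightarrow> opt_pref_eq R (demand A R pv b) w"
proof -
  let ?best = "\<lambda>d. d \<in> outcomes A \<and> pv d \<le> b \<and> (\<forall>w\<in>outcomes A. pv w \<le> b \<longrightarrow> opt_pref_eq R d w)"
  let ?S = "{w\<in>outcomes A. pv w \<le> b}"
  have "finite ?S" "None \<in> ?S"
    using assms(2-4) by (auto simp: outcomes_def)
  then obtain d where d: "?best d"
    using ex_opt_pref_maximal[OF assms(1), of ?S] by (auto simp: outcomes_def)
  moreover have "e = d" if "?best e" for e
  proof -
    have "trans R" "irrefl R" using assms(1) by (auto simp: strict_linear_order_on_def)
    moreover have "opt_pref_eq R e d" "opt_pref_eq R d e" using that d by auto
    ultimately show "e = d"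
      using opt_pref_trans[of R e d e] opt_pref_irrefl[of R e] unfolding opt_pref_eq_def by auto
  qed
  ultimately have "?best (demand A R pv b)"
    unfolding demand_def by (rule theI)
  then show "demand A R pv b \<in> outcomes A" "pv (demand A R pv b) \<le> b"
    "\<And>w. w \<in> outcomes A \<Longrightarrow> pv w \<le> b \<Longrightarrow> opt_pref_eq R (demand A R pv b) w"
    by auto
qed

lemma price_gt_if_pref_demand:
  assumes "strict_linear_order_on A R" "finite A" "pv None = 0" "0 \<le> b"
    and "w \<in> outcomes A" "opt_pref R w (demand A R pv b)"
  shows "b < pv w"
proof (rule ccontr)
  assume "\<not> b < pv w"
  then have "opt_pref_eq R (demand A R pv b) w"
    using demand_spec(3)[of A R pv b, OF assms(1-5)] by simp
  moreover have "trans R" "irrefl R" using assms(1) by (auto simp: strict_linear_order_on_def)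
  ultimately show False
    using assms(6) opt_pref_opt_pref_eq_trans opt_pref_irrefl by metis
qed

lemma covered_price_gt:
  assumes "strict_linear_order_on A (pref v)" "finite A" "p v None = 0" "\<epsilon> \<le> 1"
    and "a \<in> A" "\<forall>c\<in>C. (a, c) \<in> pref v" "covered A pref p \<epsilon> C v"
  shows "1 - \<epsilon> < p v (Some a)"
proof -
  obtain c where "c \<in> C" and c: "opt_pref_eq (pref v) (Some c) (boundary A pref p \<epsilon> v)"
    using assms(7) by (auto simp: covered_def)
  then have "opt_pref (pref v) (Some a) (Some c)" using assms(6) by simp
  moreover have "trans (pref v)" using assms(1) by (simp add: strict_linear_order_on_def)
  ultimately have "opt_pref (pref v) (Some a) (demand A (pref v) (p v) (1 - \<epsilon>))"
    using c opt_pref_opt_pref_eq_trans unfolding boundary_def by metis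
  then show ?thesis
    using price_gt_if_pref_demand[of A "pref v" "p v", OF assms(1-3)] assms(4,5)
    by (simp add: outcomes_def)
qed

text \<open>On each income \<open>t\<close> at most one indicator is nonzero, so the integrand is the price
  of the demand at \<open>t\<close>, which is at most \<open>t\<close>. Non-measurable demand events have measure zero
  and are dropped first.\<close>

lemma expected_price_le_expected_income:
  assumes "real_distribution I" "measure I {0..1} = 1" "finite W"
    and "\<And>t. t \<in> {0..1} \<Longrightarrow> D t \<in> W \<and> f (D t) \<le> t"
  shows "(\<Sum>w\<in>W. f w * measure I {t. D t = w}) \<le> integral\<^sup>L I (\<lambda>t. t)"
proof -
  interpret real_distribution I by (rule assms(1))
  let ?E = "\<lambda>w. {t. D t = w}"
  define M where "M = {w\<in>W. ?E w \<in> sets I}"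
  have "finite M" using assms(3) by (simp add: M_def)
  have int_ind: "integrable I (indicat_real (?E w))" if "w \<in> M" for w
    using that by (intro integrable_real_indicator) (auto simp: M_def emeasure_eq_measure)
  have support: "AE t in I. t \<in> {0..1}"
    using AE_prob_1[OF assms(2)] .
  have "(\<Sum>w\<in>W. f w * measure I (?E w)) = (\<Sum>w\<in>M. f w * measure I (?E w))"
    by (rule sum.mono_neutral_right) (auto simp: M_def assms(3) measure_notin_sets)
  also have "\<dots> = integral\<^sup>L I (\<lambda>t. \<Sum>w\<in>M. f w * indicator (?E w) t)"
    by (simp add: Bochner_Integration.integral_sum int_ind M_def)
  also have "\<dots> \<le> integral\<^sup>L I (\<lambda>t. t)"
  proof (rule integral_mono_AE)
    show "integrable I (\<lambda>t. \<Sum>w\<in>M. f w * indicator (?E w) t)"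
      by (simp add: int_ind)
    show "integrable I (\<lambda>t. t)"
      by (rule integrable_const_bound[where B=1]) (use support in \<open>auto elim!: AE_mp\<close>)
    show "AE t in I. (\<Sum>w\<in>M. f w * indicator (?E w) t) \<le> t"
      using support
    proof (rule AE_mp, intro AE_I2 impI)
      fix t :: real
      assume "t \<in> {0..1}"
      then have "(\<Sum>w\<in>M. f w * indicator (?E w) t) = (if D t \<in> M then f (D t) else 0)"
        by (simp add: indicator_def sum.delta' \<open>finite M\<close> if_distrib cong: if_cong)
      then show "(\<Sum>w\<in>M. f w * indicator (?E w) t) \<le> t"
        using assms(4) \<open>t \<in> {0..1}\<close> by auto
    qed
  qed
  finally show ?thesis .
qed

lemma expected_spending_le_threshold:
  assumes "strict_linear_order_on A R" "finite A" "pv None = 0"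
    and "threshold_distribution I \<beta> \<epsilon>"
  shows "(\<Sum>w\<in>outcomes A. pv w * measure I {t. demand A R pv t = w}) \<le> \<beta>"
proof -
  have "(\<Sum>w\<in>outcomes A. pv w * measure I {t. demand A R pv t = w}) \<le> integral\<^sup>L I (\<lambda>t. t)"
    using assms(4) demand_spec[of A R pv, OF assms(1-3)] assms(2)
    by (intro expected_price_le_expected_income)
      (auto simp: threshold_distribution_def outcomes_def)
  also have "\<dots> \<le> \<beta>"
    using assms(4) by (simp add: threshold_distribution_def)
  finally show ?thesis .
qed

lemma LEO_price_le_revenue:
  assumes "LEO V A pref I B x y p" "finite A" "a \<in> A"
  shows "B * (\<Sum>v\<in>V. p v (Some a)) \<le> (\<Sum>b\<in>A. (\<Sum>v\<in>V. p v (Some b)) * y b)"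
proof -
  let ?z = "\<lambda>b. if b = a then B else 0"
  have "B * (\<Sum>v\<in>V. p v (Some a)) = (\<Sum>b\<in>A. (\<Sum>v\<in>V. p v (Some b)) * ?z b)"
    using assms(2,3) by (simp add: if_distrib mult.commute cong: if_cong)
  also have "\<dots> \<le> (\<Sum>b\<in>A. (\<Sum>v\<in>V. p v (Some b)) * y b)"
    using assms by (simp add: LEO_def less_imp_le)
  finally show ?thesis .
qed

text \<open>Complementary slackness: \<open>p\<^sub>v\<^sub>b y\<^sub>b = p\<^sub>v\<^sub>b x\<^sub>v\<^sub>b\<close>, as the price vanishes
  unless \<open>x\<^sub>v\<^sub>b = y\<^sub>b\<close>.\<close>

lemma LEO_revenue_eq_spending:
  assumes "LEO V A pref I B x y p" "finite A"
  shows "(\<Sum>b\<in>A. (\<Sum>v\<in>V. p v (Some b)) * y b)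
    = (\<Sum>v\<in>V. \<Sum>w\<in>outcomes A. p v w * measure I {t. demand A (pref v) (p v) t = w})"
proof -
  have "(\<Sum>b\<in>A. (\<Sum>v\<in>V. p v (Some b)) * y b) = (\<Sum>v\<in>V. \<Sum>b\<in>A. p v (Some b) * y b)"
    by (simp add: sum_distrib_right sum.swap[of _ A V])
  also have "\<dots> = (\<Sum>v\<in>V. \<Sum>b\<in>A. p v (Some b) * x v (Some b))"
  proof (intro sum.cong refl)
    fix v b
    assume "v \<in> V" "b \<in> A"
    then show "p v (Some b) * y b = p v (Some b) * x v (Some b)"
      using assms(1) unfolding LEO_def by (metis mult_zero_left order_less_le)
  qed
  also have "\<dots> = (\<Sum>v\<in>V. \<Sum>w\<in>outcomes A. p v w * x v w)"
    using assms by (simp add: outcomes_def sum.reindex LEO_def)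
  also have "\<dots> = (\<Sum>v\<in>V. \<Sum>w\<in>outcomes A. p v w * measure I {t. demand A (pref v) (p v) t = w})"
    using assms(1) by (simp add: LEO_def)
  finally show ?thesis .
qed

lemma LEO_revenue_le:
  assumes "election V A pref" "threshold_distribution I \<beta> \<epsilon>" "LEO V A pref I B x y p"
  shows "(\<Sum>b\<in>A. (\<Sum>v\<in>V. p v (Some b)) * y b) \<le> \<beta> * card V"
proof -
  have "(\<Sum>b\<in>A. (\<Sum>v\<in>V. p v (Some b)) * y b)
      = (\<Sum>v\<in>V. \<Sum>w\<in>outcomes A. p v w * measure I {t. demand A (pref v) (p v) t = w})"
    using assms(1,3) by (simp add: LEO_revenue_eq_spending election_def)
  also have "\<dots> \<le> (\<Sum>v\<in>V. \<beta>)"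
    using assms by (intro sum_mono expected_spending_le_threshold) (auto simp: election_def LEO_def)
  finally show ?thesis by (simp add: mult.commute)
qed

theorem mainTheorem8:
  fixes V :: "'v set" and A :: "'a set" and pref :: "'v \<Rightarrow> ('a \<times> 'a) set"
    and I :: "real measure" and \<beta> \<epsilon> :: real
    and x p :: "'v \<Rightarrow> 'a option \<Rightarrow> real" and y :: "'a \<Rightarrow> real" and C :: "'a set" and a :: 'a
  assumes "0 < \<beta>" "\<beta> < 1" "0 < \<epsilon>" "\<epsilon> < 1"
    and "election V A pref"
    and "threshold_distribution I \<beta> \<epsilon>"
    and "LEO V A pref I 1 x y p"
    and "C \<subseteq> A"
    and "a \<in> A - C"
  shows "real (card {v\<in>V. \<forall>c\<in>C. (a, c) \<in> pref v})
         \<le> \<beta> * real (card V) / (1 - \<epsilon>) + real (card {v\<in>V. \<not> covered A pref p \<epsilon> C v})"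
proof -
  have "finite V" "finite A" using assms(5) by (auto simp: election_def)
  define blocking where "blocking = {v\<in>V. (\<forall>c\<in>C. (a, c) \<in> pref v) \<and> covered A pref p \<epsilon> C v}"
  have price_a: "1 - \<epsilon> < p v (Some a)" if "v \<in> blocking" for v
    using that assms(4,5,7,9) \<open>finite A\<close>
    by (intro covered_price_gt[where C = C]) (auto simp: blocking_def election_def LEO_def)
  have "(1 - \<epsilon>) * card blocking = (\<Sum>v\<in>blocking. 1 - \<epsilon>)"
    by simp
  also have "\<dots> \<le> (\<Sum>v\<in>blocking. p v (Some a))"
    using price_a by (intro sum_mono) (simp add: less_imp_le)
  also have "\<dots> \<le> (\<Sum>v\<in>V. p v (Some a))"
    using assms(7,9) \<open>finite V\<close>
    by (intro sum_mono2) (auto simp: blocking_def LEO_def outcomes_def)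
  also have "\<dots> \<le> \<beta> * card V"
    using LEO_price_le_revenue[OF assms(7) \<open>finite A\<close>, of a] LEO_revenue_le[OF assms(5-7)] assms(9)
    by simp
  finally have "card blocking \<le> \<beta> * card V / (1 - \<epsilon>)"
    using assms(4) by (simp add: field_simps)
  moreover have "card {v\<in>V. \<forall>c\<in>C. (a, c) \<in> pref v}
      \<le> card (blocking \<union> {v\<in>V. \<not> covered A pref p \<epsilon> C v})"
    using \<open>finite V\<close> by (intro card_mono) (auto simp: blocking_def)
  moreover have "card (blocking \<union> {v\<in>V. \<not> covered A pref p \<epsilon> C v})
      \<le> card blocking + card {v\<in>V. \<not> covered A pref p \<epsilon> C v}"
    by (rule card_Un_le)
  ultimately show ?thesis by linarith
qed

end
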